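(* Let $n\ge 3$ and $i\ge 0$. Then: (a) if $3\cdot 4^i\le n<6\cdot 4^i$, the set $\{2\cdot 4^j-1 : 0\le j\le i\}\cup\{3\cdot 4^i-1\}$, which has cardinality $i+2$, is a string attractor of $\mathbf{p}[0..n-1]$; (b) if $6\cdot 4^i\le n<12\cdot 4^i$, the set $\{4^j-1 : 0\le j\le i+1\}\cup\{6\cdot 4^i-1\}$, which has cardinality $i+3$, is a string attractor of $\mathbf{p}[0..n-1]$.
   Context: $\mathbf{p}=11010001\cdots$ is the infinite binary word, indexed from $0$, with $\mathbf{p}[n]=1$ if $n+1$ is a power of $2$ and $\mathbf{p}[n]=0$ otherwise (so $\mathbf{p}[0]=\mathbf{p}[1]=\mathbf{p}[3]=\mathbf{p}[7]=1$). A string attractor of a finite word $w=w[0..n-1]$ is a set $S\subseteq\{0,\ldots,n-1\}$ such that every nonempty factor $f$ of $w$ has an occurrence $w[p..q]=f$ with $p\le k\le q$ for some $k\in S$. *)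

theory Defs
  imports Main
begin

definition pword :: "nat \<Rightarrow> nat" where
  "pword n = (if (\<exists>k. n + 1 = 2 ^ k) then 1 else 0)"

text \<open>A finite word of length n is represented by a function w (only positions < n matter).\<close>
definition string_attractor :: "(nat \<Rightarrow> 'a) \<Rightarrow> nat \<Rightarrow> nat set \<Rightarrow> bool" where
  "string_attractor w n S \<longleftrightarrow> S \<subseteq> {0..<n} \<and>
     (\<forall>a b. a \<le> b \<and> b < n \<longrightarrow>
        (\<exists>a'. a' + (b - a) < n \<and> (\<forall>t\<le>b - a. w (a' + t) = w (a + t)) \<and>
              (\<exists>k\<in>S. a' \<le> k \<and> k \<le> a' + (b - a))))"

end

(*
  The ones of p sit at the positions 2^k - 1, so on [2^j, 2^(j+2) - 2] the word p has a
  single one, at 2^(j+1) - 1, and shifting a factor inside that window by 2^(j+1) yields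
  another occurrence of it.  Let 3 * 2^m <= n < 6 * 2^m and let S contain 3 * 2^m - 1 and all
  2^k - 1 with k <= m + 1 and k = m + 1 (mod 2).  A factor of zeros has a copy inside the
  longest zero run of the prefix, the one around 3 * 2^m - 1.  A factor through a one 2^k - 1
  with k of the wrong parity either reaches one of the neighbours 2^(k-1) - 1, 2^(k+1) - 1,
  which lie in S, or has a shifted copy through 2^(k+1) - 1; the one at 2^(m+2) - 1 is shifted
  back onto 2^(m+1) - 1 instead.  Parts (a) and (b) are the cases m = 2i and m = 2i + 1.
*)
theory Submission
  imports Defs
begin

lemma pword_pow2_minus_1 [simp]: "pword (2^k - 1) = 1"
  unfolding pword_def by auto

lemma pword_neq_0_imp_pow2_minus_1: "pword x \<noteq> 0 \<Longrightarrow> \<exists>k. x = 2^k - 1"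
  unfolding pword_def by (metis add_diff_cancel_right')

lemma pword_eq_0_between:
  assumes "2^j < x + 1" and "x + 1 < 2^Suc j"
  shows "pword x = 0"
proof -
  have "x + 1 \<noteq> 2^k" for k
  proof
    assume "x + 1 = 2^k"
    then have "j < k" and "k < Suc j"
      using assms by (simp_all add: power_strict_increasing_iff del: power_Suc)
    then show False by simp
  qed
  then show ?thesis unfolding pword_def by auto
qed

lemma pword_shift:
  assumes "2^j \<le> x" and "x \<le> 4 * 2^j - 2"
  shows "pword (x + 2 * 2^j) = pword x"
proof -
  have "0 < (2::nat)^j" by simp
  with assms(2) have upper: "x + 1 < 4 * 2^j" by linarith
  consider "x + 1 < 2 * 2^j" | "x + 1 = 2 * 2^j" | "2 * 2^j < x + 1" by linarith
  then show ?thesis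
  proof cases
    case 1
    then show ?thesis using assms(1) pword_eq_0_between[of j] pword_eq_0_between[of "Suc j"]
      by simp
  next
    case 2
    then have "x = 2^Suc j - 1" and "x + 2 * 2^j = 2^Suc (Suc j) - 1" by simp_all
    then show ?thesis by (simp only: pword_pow2_minus_1)
  next
    case 3
    have "pword x = 0" using 3 upper pword_eq_0_between[of "Suc j" x] by simp
    moreover have "pword (x + 2 * 2^j) = 0"
      using 3 upper pword_eq_0_between[of "Suc (Suc j)" "x + 2 * 2^j"] by simp
    ultimately show ?thesis by simp
  qed
qed

lemma pword_zero_run_ends_before:
  assumes "\<forall>t\<le>d. pword (a + t) = 0" and "a < 2^j"
  shows "a + d + 1 < 2^j"
proof (rule ccontr)
  assume "\<not> a + d + 1 < 2^j"
  then have "pword (a + (2^j - 1 - a)) = 0" using assms(1) by simp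
  moreover have "a + (2^j - 1 - a) = 2^j - 1" using assms(2) by simp
  ultimately show False by (metis pword_pow2_minus_1 zero_neq_one)
qed

definition has_crossing_occurrence :: "(nat \<Rightarrow> 'a) \<Rightarrow> nat \<Rightarrow> nat set \<Rightarrow> nat \<Rightarrow> nat \<Rightarrow> bool" where
  "has_crossing_occurrence w n S a d \<longleftrightarrow>
     (\<exists>a'. a' + d < n \<and> (\<forall>t\<le>d. w (a' + t) = w (a + t)) \<and> (\<exists>k\<in>S. a' \<le> k \<and> k \<le> a' + d))"

lemma has_crossing_occurrenceI:
  assumes "a' + d < n" and "\<And>t. t \<le> d \<Longrightarrow> w (a' + t) = w (a + t)"
    and "k \<in> S" and "a' \<le> k" and "k \<le> a' + d"
  shows "has_crossing_occurrence w n S a d"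
  unfolding has_crossing_occurrence_def using assms by blast

lemma string_attractor_iff_crossing:
  "string_attractor w n S \<longleftrightarrow>
     S \<subseteq> {0..<n} \<and> (\<forall>a d. a + d < n \<longrightarrow> has_crossing_occurrence w n S a d)"
proof -
  have "(\<forall>a b. a \<le> b \<and> b < n \<longrightarrow> has_crossing_occurrence w n S a (b - a)) \<longleftrightarrow>
        (\<forall>a d. a + d < n \<longrightarrow> has_crossing_occurrence w n S a d)"
    by (metis add_diff_cancel_left' le_add1 le_add_diff_inverse)
  then show ?thesis unfolding string_attractor_def has_crossing_occurrence_def by simp
qed

context
  fixes m n :: nat and S :: "nat set"
  assumes n_lower: "3 * 2^m \<le> n" and n_upper: "n < 6 * 2^m"
    and pow2_in_S: "\<And>k. k \<le> m + 1 \<Longrightarrow> even (m + 1 - k) \<Longrightarrow> 2^k - 1 \<in> S"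
    and mid_in_S: "3 * 2^m - 1 \<in> S"
begin

lemma crossing_occurrence_of_zero_factor:
  assumes "a + d < n" and zero: "\<forall>t\<le>d. pword (a + t) = 0"
  shows "has_crossing_occurrence pword n S a d"
proof -
  define h :: nat where "h = 2^m"
  have h: "2^Suc m = 2 * h" "2^Suc (Suc m) = 4 * h" "h \<ge> 1" by (simp_all add: h_def)
  have fits: "d + 2 * h < n \<and> d + 2 \<le> 2 * h"
  proof -
    consider "a < h" | "h \<le> a" "a < 2 * h" | "2 * h \<le> a" "a < 4 * h" | "4 * h \<le> a"
      by linarith
    then show ?thesis
    proof cases
      case 1
      then show ?thesis using pword_zero_run_ends_before[OF zero, of m] h_def n_lower by simp
    next
      case 2
      then show ?thesis using pword_zero_run_ends_before[OF zero, of "Suc m"] h n_lower h_def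
        by simp
    next
      case 3
      then show ?thesis using pword_zero_run_ends_before[OF zero, of "Suc (Suc m)"] h \<open>a + d < n\<close>
        by simp
    qed (use \<open>a + d < n\<close> n_upper h_def in simp)
  qed
  then obtain R where R: "d + 2 * h \<le> R" "R < n" "R \<le> 4 * h - 2" "3 * h - 1 \<le> R"
    using n_lower h_def by (intro that[of "min (n - 1) (4 * h - 2)"]) auto
  define a' where "a' = min (3 * h - 1) (R - d)"
  have a': "2 * h \<le> a'" "a' + d \<le> R" "a' \<le> 3 * h - 1" "3 * h - 1 \<le> a' + d"
    using R h unfolding a'_def by linarith+
  show ?thesis
  proof (rule has_crossing_occurrenceI[of a'])
    show "a' + d < n" using a' R by linarith
    show "pword (a' + t) = pword (a + t)" if "t \<le> d" for t
      using pword_eq_0_between[of "Suc m" "a' + t"] zero that a' R h by simp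
    show "3 * h - 1 \<in> S" using mid_in_S h_def by simp
  qed (use a' in simp_all)
qed

lemma crossing_occurrence_through_top_one:
  assumes "a + d < n" and "a \<le> 4 * 2^m - 1" and "4 * 2^m - 1 \<le> a + d"
  shows "has_crossing_occurrence pword n S a d"
proof (cases "a \<le> 3 * 2^m - 1")
  case True
  then show ?thesis
    using assms mid_in_S by (intro has_crossing_occurrenceI[where a' = a and k = "3 * 2^m - 1"]) auto
next
  case False
  show ?thesis
  proof (rule has_crossing_occurrenceI[of "a - 2 * 2^m"])
    show "a - 2 * 2^m + d < n" using assms(1) by linarith
    show "pword (a - 2 * 2^m + t) = pword (a + t)" if "t \<le> d" for t
      using pword_shift[of m "a - 2 * 2^m + t"] False that assms(1) n_upper by simp
    show "2^Suc m - 1 \<in> S" using pow2_in_S[of "Suc m"] by simp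
  qed (use False assms in simp_all)
qed

lemma crossing_occurrence_through_off_parity_one:
  assumes "a + d < n" and "a \<le> 2^k - 1" and "2^k - 1 \<le> a + d"
    and "k \<le> m" and "even (m - k)"
  shows "has_crossing_occurrence pword n S a d"
proof -
  have up: "2^Suc k - 1 \<in> S" using pow2_in_S[of "Suc k"] assms(4,5) by simp
  have "2^k \<le> (2::nat)^m" using assms(4) by (simp add: power_increasing)
  then have far: "3 * 2^k \<le> n" using n_lower by linarith
  show ?thesis
  proof (cases "2^Suc k - 1 \<le> a + d")
    case True
    then show ?thesis using assms up by (intro has_crossing_occurrenceI[of a]) auto
  next
    case short: False
    show ?thesis
    proof (cases k)
      case 0
      then have "a = 0" "d = 0" using assms(2) short by simp_all
      then show ?thesis using up 0 far pword_pow2_minus_1[of 0] pword_pow2_minus_1[of 1]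
        by (intro has_crossing_occurrenceI[where a' = 1 and k = 1]) simp_all
    next
      case (Suc j)
      have pow: "2^k = 2 * (2::nat)^j" "2^Suc k = 4 * (2::nat)^j" "0 < (2::nat)^j"
        using Suc by simp_all
      show ?thesis
      proof (cases "a \<le> 2^j - 1")
        case True
        have "2^j - 1 \<in> S" using pow2_in_S[of j] Suc assms(4,5) by simp
        then show ?thesis
          using True pow assms by (intro has_crossing_occurrenceI[where a' = a and k = "2^j - 1"]) auto
      next
        case False
        show ?thesis
        proof (rule has_crossing_occurrenceI[of "a + 2^k"])
          show "a + 2^k + d < n" using short pow far by linarith
          show "pword (a + 2^k + t) = pword (a + t)" if "t \<le> d" for t
          proof -
            have "2^j \<le> a + t" and "a + t \<le> 4 * 2^j - 2" using False short pow that by linarith+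
            then show ?thesis using pword_shift[of j "a + t"] pow by (simp add: ac_simps)
          qed
          show "a + 2^k \<le> 2^Suc k - 1" and "2^Suc k - 1 \<le> a + 2^k + d"
            using assms(2,3) pow by linarith+
        qed (rule up)
      qed
    qed
  qed
qed

lemma string_attractor_pword_prefix:
  assumes "S \<subseteq> {0..<n}"
  shows "string_attractor pword n S"
  unfolding string_attractor_iff_crossing
proof (intro conjI assms allI impI)
  fix a d assume factor: "a + d < n"
  show "has_crossing_occurrence pword n S a d"
  proof (cases "\<forall>t\<le>d. pword (a + t) = 0")
    case True
    with factor show ?thesis by (rule crossing_occurrence_of_zero_factor)
  next
    case False
    then obtain t k where "t \<le> d" and "a + t = 2^k - 1" using pword_neq_0_imp_pow2_minus_1 by blast
    then have one: "a \<le> 2^k - 1" "2^k - 1 \<le> a + d" by linarith+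
    have "(2::nat)^k \<le> 6 * 2^m" using one factor n_upper by linarith
    also have "\<dots> < 2^(m + 3)" by (simp add: power_add)
    finally have "k < m + 3" by simp
    then have "(k \<le> m + 1 \<and> even (m + 1 - k)) \<or> k = m + 2 \<or> (k \<le> m \<and> even (m - k))"
      by presburger
    then consider "k \<le> m + 1" "even (m + 1 - k)" | "k = m + 2" | "k \<le> m" "even (m - k)"
      by blast
    then show ?thesis
    proof cases
      case 1
      then show ?thesis using one factor pow2_in_S
        by (intro has_crossing_occurrenceI[where a' = a and k = "2^k - 1"]) auto
    next
      case 2
      then show ?thesis using one factor crossing_occurrence_through_top_one by simp
    next
      case 3
      then show ?thesis using one factor crossing_occurrence_through_off_parity_one by simp
    qed
  qed
qed

end

lemma pow4_mod_3: "(4::nat)^j mod 3 = 1"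
  using power_mod[of "4::nat" 3 j] by simp

lemma card_pow4_set_insert:
  fixes c x :: nat
  assumes "0 < c" and "\<not> 3 dvd c" and "0 < x" and "3 dvd x"
  shows "card ({c * 4^j - 1 | j. j \<le> i} \<union> {x - 1}) = i + 2"
proof -
  have set_eq: "{c * 4^j - 1 | j. j \<le> i} = (\<lambda>j. c * 4^j - 1) ` {..i}" by auto
  have "inj_on (\<lambda>j. c * 4^j - 1) {..i}"
  proof (rule inj_onI)
    fix j k assume "c * 4^j - 1 = c * 4^k - 1"
    moreover have "0 < c * 4^j" and "0 < c * 4^k" using assms(1) by simp_all
    ultimately have "c * 4^j = c * 4^k" by linarith
    then show "j = k" using assms(1) by simp
  qed
  then have card_set: "card ((\<lambda>j. c * 4^j - 1) ` {..i}) = i + 1"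
    by (simp add: card_image)
  have ne: "c * 4^j \<noteq> x" for j
  proof
    assume "c * 4^j = x"
    then have "c mod 3 = x mod 3"
      by (metis mod_mult_right_eq mult.right_neutral pow4_mod_3)
    with assms(2,4) show False by (simp add: dvd_eq_mod_eq_0)
  qed
  have "x - 1 \<noteq> c * 4^j - 1" for j
  proof -
    have "0 < c * 4^j" using assms(1) by simp
    then show ?thesis using ne[of j] assms(3) by linarith
  qed
  then have "x - 1 \<notin> (\<lambda>j. c * 4^j - 1) ` {..i}" by auto
  then show ?thesis unfolding set_eq using card_set by simp
qed

lemma pow2_double_exponent: "(2::nat)^(2 * j) = 4^j"
  by (simp add: power_mult)

lemma string_attractor_pword_3_pow4:
  assumes "3 * 4^i \<le> n" and "n < 6 * 4^i"
  shows "string_attractor pword n ({(2::nat) * 4^j - 1 | j. j \<le> i} \<union> {3 * 4^i - 1})"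
proof (rule string_attractor_pword_prefix[where m = "2 * i"])
  show "3 * 2^(2 * i) \<le> n" and "n < 6 * 2^(2 * i)"
    using assms by (simp_all add: pow2_double_exponent)
  show "3 * 2^(2 * i) - 1 \<in> {(2::nat) * 4^j - 1 | j. j \<le> i} \<union> {3 * 4^i - 1}"
    by (simp add: pow2_double_exponent)
  show "2^k - 1 \<in> {(2::nat) * 4^j - 1 | j. j \<le> i} \<union> {3 * 4^i - 1}"
    if "k \<le> 2 * i + 1" and "even (2 * i + 1 - k)" for k
  proof -
    from that have "odd k" by presburger
    then obtain j where "k = 2 * j + 1" by (rule oddE)
    then show ?thesis using that pow2_double_exponent[of j] by auto
  qed
  have "2 * 4^j - 1 < n" if "j \<le> i" for j
  proof -
    have "(4::nat)^j \<le> 4^i" and "0 < (4::nat)^i" using that by (simp_all add: power_increasing)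
    then show ?thesis using assms(1) by linarith
  qed
  moreover have "3 * 4^i - 1 < n"
    using assms(1) zero_less_power[of "4::nat" i] by linarith
  ultimately show "{(2::nat) * 4^j - 1 | j. j \<le> i} \<union> {3 * 4^i - 1} \<subseteq> {0..<n}"
    by auto
qed

lemma string_attractor_pword_6_pow4:
  assumes "6 * 4^i \<le> n" and "n < 12 * 4^i"
  shows "string_attractor pword n ({(4::nat)^j - 1 | j. j \<le> i + 1} \<union> {6 * 4^i - 1})"
proof (rule string_attractor_pword_prefix[where m = "2 * i + 1"])
  show "3 * 2^(2 * i + 1) \<le> n" and "n < 6 * 2^(2 * i + 1)"
    using assms by (simp_all add: pow2_double_exponent)
  show "3 * 2^(2 * i + 1) - 1 \<in> {(4::nat)^j - 1 | j. j \<le> i + 1} \<union> {6 * 4^i - 1}"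
    by (simp add: pow2_double_exponent)
  show "2^k - 1 \<in> {(4::nat)^j - 1 | j. j \<le> i + 1} \<union> {6 * 4^i - 1}"
    if "k \<le> 2 * i + 1 + 1" and "even (2 * i + 1 + 1 - k)" for k
  proof -
    from that have "even k" by presburger
    then obtain j where "k = 2 * j" by (rule evenE)
    then show ?thesis using that pow2_double_exponent[of j] by auto
  qed
  have "4^j - 1 < n" if "j \<le> i + 1" for j
  proof -
    have "(4::nat)^j \<le> 4 * 4^i" and "0 < (4::nat)^i"
      using that power_increasing[of j "i + 1" "4::nat"] by simp_all
    then show ?thesis using assms(1) by linarith
  qed
  moreover have "6 * 4^i - 1 < n"
    using assms(1) zero_less_power[of "4::nat" i] by linarith
  ultimately show "{(4::nat)^j - 1 | j. j \<le> i + 1} \<union> {6 * 4^i - 1} \<subseteq> {0..<n}"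
    by auto
qed

theorem theorem8:
  fixes n i :: nat
  assumes "n \<ge> 3"
  shows "(3 * 4 ^ i \<le> n \<and> n < 6 * 4 ^ i \<longrightarrow>
            card ({(2::nat) * 4 ^ j - 1 | j. j \<le> i} \<union> {3 * 4 ^ i - 1}) = i + 2 \<and>
            string_attractor pword n ({(2::nat) * 4 ^ j - 1 | j. j \<le> i} \<union> {3 * 4 ^ i - 1}))
       \<and> (6 * 4 ^ i \<le> n \<and> n < 12 * 4 ^ i \<longrightarrow>
            card ({(4::nat) ^ j - 1 | j. j \<le> i + 1} \<union> {6 * 4 ^ i - 1}) = i + 3 \<and>
            string_attractor pword n ({(4::nat) ^ j - 1 | j. j \<le> i + 1} \<union> {6 * 4 ^ i - 1}))"
proof -
  have "card ({(2::nat) * 4 ^ j - 1 | j. j \<le> i} \<union> {3 * 4 ^ i - 1}) = i + 2"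
    by (rule card_pow4_set_insert) simp_all
  moreover have "card ({(4::nat) ^ j - 1 | j. j \<le> i + 1} \<union> {6 * 4 ^ i - 1}) = i + 3"
    using card_pow4_set_insert[of 1 "6 * 4^i" "i + 1"] by simp
  ultimately show ?thesis
    using string_attractor_pword_3_pow4 string_attractor_pword_6_pow4 by blast
qed

end
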